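(* Let $0<e<\Lambda$, $\phi_h>0$, $f:[0,\phi_h]\to(0,1]$ strictly concave, strictly decreasing, differentiable with $f(0)=1$. Consider the two-player game with action sets $[0,\phi_h]$ and payoffs $\tilde{\mathcal M}_i(\phi_i,\phi_{-i})$ given by: - if $\phi_i=\phi_{-i}$: $e\phi_i$ if $\phi_i<\underline\phi$, and $\frac{\Lambda}{2}f(\phi_i)\phi_i$ if $\phi_i\ge\underline\phi$; - if $\phi_i<\phi_{-i}$: $e\phi_i$ if $\phi_{-i}<\bar\phi$, and $\min\{\Lambda f(\phi_i),e\}\phi_i$ if $\phi_{-i}\ge\bar\phi$; - if $\phi_i>\phi_{-i}$: $e\phi_i$ if $\phi_i<\underline\phi$, $m(\phi_i)$ if $\phi_i\in[\underline\phi,\bar\phi)$, and $0$ if $\phi_i\ge\bar\phi$. Let $\phi^*_m$ be the unique maximizer of $m(\phi)=(\Lambda f(\phi)-e)\phi$ over $[0,\phi_h]$, and set $\phi_U^*=\phi^*_m$, $\phi_L^*=m(\phi^*_m)/e=\bigl(\frac{\Lambda f(\phi^*_m)}{e}-1\bigr)\phi^*_m$. If $\underline\phi<\phi^*_m\le\min\{\phi_h,\bar\phi\}$, then $[\phi_L^*,\phi_U^*]$ is an equilibrium cycle.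
   Context: These payoffs are the limiting (driver abandonment rate $\beta\to0$) long-run revenue rates of two symmetric ride-hailing platforms using static prices, when passengers (total Poisson rate $\Lambda$) split across platforms by a Wardrop equilibrium equalizing the probability of not obtaining a ride; $e$ is the effective driver arrival rate per platform and $f(\phi)$ the probability a passenger accepts price $\phi$. Thresholds: $\underline{\phi}:=\inf\{\phi\in[0,\phi_h]: f(\phi)\le 2e/\Lambda\}$, $\bar\phi:=\inf\{\phi\in[0,\phi_h]: f(\phi)\le e/\Lambda\}$, $\inf\emptyset=+\infty$ (so they equal $f^{-1}(2e/\Lambda)$, $f^{-1}(e/\Lambda)$ when in range and $0$ when $2e/\Lambda>1$, resp. $e/\Lambda>1$). Equilibrium cycle: a closed interval $[a,b]\subseteq[0,\phi_h]$ such that (i) for every player $i$, every $\phi_{-i}\in[a,b]$ and every $\phi_i\in[0,\phi_h]\setminus[a,b]$ there is $\phi_i'\in[a,b]$ with $\tilde{\mathcal M}_i(\phi_i',\phi_{-i})>\tilde{\mathcal M}_i(\phi_i,\phi_{-i})$; and (ii) for every $(\phi_1,\phi_2)\in[a,b]^2$ there exist a player $i$ and $\phi_i'\in[a,b]$ with $\tilde{\mathcal M}_i(\phi_i',\phi_{-i})>\tilde{\mathcal M}_i(\phi_i,\phi_{-i})$. *)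

theory Defs
  imports "HOL-Analysis.Analysis" "HOL-Library.Extended_Real"
begin

definition strictly_concave_on :: "real set \<Rightarrow> (real \<Rightarrow> real) \<Rightarrow> bool" where
  "strictly_concave_on S f \<longleftrightarrow> convex S \<and>
     (\<forall>x\<in>S. \<forall>y\<in>S. x \<noteq> y \<longrightarrow> (\<forall>t. 0 < t \<and> t < 1 \<longrightarrow>
        f ((1 - t) * x + t * y) > (1 - t) * f x + t * f y))"

text \<open>Thresholds, with inf of the empty set equal to +infinity (hence extended reals).\<close>
definition phi_low :: "real \<Rightarrow> real \<Rightarrow> (real \<Rightarrow> real) \<Rightarrow> real \<Rightarrow> ereal" where
  "phi_low Lam e f phih = Inf (ereal ` {p \<in> {0..phih}. f p \<le> 2 * e / Lam})"

definition phi_bar :: "real \<Rightarrow> real \<Rightarrow> (real \<Rightarrow> real) \<Rightarrow> real \<Rightarrow> ereal" where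
  "phi_bar Lam e f phih = Inf (ereal ` {p \<in> {0..phih}. f p \<le> e / Lam})"

definition mfun :: "real \<Rightarrow> real \<Rightarrow> (real \<Rightarrow> real) \<Rightarrow> real \<Rightarrow> real" where
  "mfun Lam e f p = (Lam * f p - e) * p"

definition payoff :: "real \<Rightarrow> real \<Rightarrow> (real \<Rightarrow> real) \<Rightarrow> real \<Rightarrow> real \<Rightarrow> real \<Rightarrow> real" where
  "payoff Lam e f phih x y =
     (if x = y then
        (if ereal x < phi_low Lam e f phih then e * x else Lam / 2 * f x * x)
      else if x < y then
        (if ereal y < phi_bar Lam e f phih then e * x else min (Lam * f x) e * x)
      else
        (if ereal x < phi_low Lam e f phih then e * x
         else if ereal x < phi_bar Lam e f phih then mfun Lam e f x
         else 0))"

text \<open>Equilibrium cycle of a two-player game with action sets [0,phih];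
  U1 x y and U2 x y are the payoffs of players 1 and 2 at the profile (x,y)
  where player 1 plays x and player 2 plays y.\<close>
definition equilibrium_cycle ::
  "real \<Rightarrow> (real \<Rightarrow> real \<Rightarrow> real) \<Rightarrow> (real \<Rightarrow> real \<Rightarrow> real) \<Rightarrow> real \<Rightarrow> real \<Rightarrow> bool" where
  "equilibrium_cycle phih U1 U2 a b \<longleftrightarrow>
     0 \<le> a \<and> a \<le> b \<and> b \<le> phih \<and>
     (\<forall>y\<in>{a..b}. \<forall>x\<in>{0..phih} - {a..b}. \<exists>x'\<in>{a..b}. U1 x' y > U1 x y) \<and>
     (\<forall>x\<in>{a..b}. \<forall>y\<in>{0..phih} - {a..b}. \<exists>y'\<in>{a..b}. U2 x y' > U2 x y) \<and>
     (\<forall>x\<in>{a..b}. \<forall>y\<in>{a..b}.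
        (\<exists>x'\<in>{a..b}. U1 x' y > U1 x y) \<or> (\<exists>y'\<in>{a..b}. U2 x y' > U2 x y))"

end

theory Submission
  imports Defs
begin

text \<open>All prices of the cycle \<open>[\<phi>\<^sub>L, \<phi>\<^sub>m]\<close> lie below \<open>phi_bar\<close>, so undercutting a rival price
  \<open>y\<close> of the cycle earns \<open>e\<close> times one's own price; hence against \<open>y\<close> some price of the cycle
  beats every payoff below \<open>e y\<close>. A price outside the cycle earns less than
  \<open>e \<phi>\<^sub>L = m(\<phi>\<^sub>m) \<le> e y\<close>: below \<open>\<phi>\<^sub>L\<close> trivially, above \<open>\<phi>\<^sub>m\<close> because \<open>m\<close>, like \<open>p f(p)\<close>, is
  strictly concave, so that \<open>\<phi>\<^sub>m\<close> is its unique maximiser. Inside the cycle the lower of two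
  prices moves up towards the higher one. A tie \<open>(x, x)\<close> below \<open>phi_low\<close> is left upwards; above
  it the tie pays \<open>\<Lambda>/2 f(x) x \<le> e x\<close>, so either undercutting helps or \<open>\<Lambda> f(x) = 2 e\<close>, and then
  the tie pays \<open>e x = m(x) < m(\<phi>\<^sub>m)\<close>, which the jump to \<open>\<phi>\<^sub>m\<close> earns.\<close>

lemma Inf_sublevel_le_iff:
  fixes f :: "real \<Rightarrow> real"
  assumes cont: "continuous_on S f" and anti: "antimono_on S f" and x: "x \<in> S"
  shows "Inf (ereal ` {p \<in> S. f p \<le> c}) \<le> ereal x \<longleftrightarrow> f x \<le> c"
proof
  assume "f x \<le> c"
  then show "Inf (ereal ` {p \<in> S. f p \<le> c}) \<le> ereal x"
    using x by (intro INF_lower) auto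
next
  assume le: "Inf (ereal ` {p \<in> S. f p \<le> c}) \<le> ereal x"
  show "f x \<le> c"
  proof (rule ccontr)
    assume "\<not> f x \<le> c"
    then have "f x - c > 0" by simp
    moreover have "\<forall>\<epsilon>>0. \<exists>\<delta>>0. \<forall>p\<in>S. dist p x < \<delta> \<longrightarrow> dist (f p) (f x) < \<epsilon>"
      using cont x unfolding continuous_on_iff by blast
    ultimately obtain d where "d > 0" and near: "\<forall>p\<in>S. dist p x < d \<longrightarrow> dist (f p) (f x) < f x - c"
      by blast
    have "ereal (x + d) \<le> Inf (ereal ` {p \<in> S. f p \<le> c})"
    proof (rule INF_greatest)
      fix p assume p: "p \<in> {p \<in> S. f p \<le> c}"
      have "x \<le> p"
      proof (rule ccontr)
        assume "\<not> x \<le> p"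
        then have "f x \<le> f p" using anti x p by (auto simp: monotone_on_def)
        then show False using p \<open>\<not> f x \<le> c\<close> by simp
      qed
      moreover have "\<not> dist p x < d"
        using near p by (auto simp: dist_real_def)
      ultimately show "ereal (x + d) \<le> ereal p" by (simp add: dist_real_def)
    qed
    then have "ereal (x + d) \<le> ereal x" using le by (rule order_trans)
    with \<open>d > 0\<close> show False by simp
  qed
qed

lemma Inf_sublevel_less_imp_less:
  fixes f :: "real \<Rightarrow> real"
  assumes "strict_antimono_on S f" and "x \<in> S" and "Inf (ereal ` {p \<in> S. f p \<le> c}) < ereal x"
  shows "f x < c"
proof -
  obtain p where "p \<in> S" "f p \<le> c" "p < x"
    using assms(3) by (auto simp: INF_less_iff)
  then show ?thesis using assms(1,2) by (fastforce simp: monotone_on_def)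
qed

lemma strictly_concave_on_mult_id:
  fixes f :: "real \<Rightarrow> real"
  assumes conc: "strictly_concave_on S f" and anti: "antimono_on S f" and nonneg: "S \<subseteq> {0..}"
  shows "strictly_concave_on S (\<lambda>p. p * f p)"
  unfolding strictly_concave_on_def
proof (intro conjI ballI impI allI)
  show "convex S" using conc by (simp add: strictly_concave_on_def)
  fix x y t :: real
  assume x: "x \<in> S" and y: "y \<in> S" and "x \<noteq> y" and t: "0 < t \<and> t < 1"
  define z where "z = (1 - t) * x + t * y"
  have "0 \<le> x" "0 \<le> y" using x y nonneg by auto
  with \<open>x \<noteq> y\<close> t have "0 < z"
    unfolding z_def by (smt (verit) mult_pos_pos mult_nonneg_nonneg)
  have "(x - y) * (f x - f y) \<le> 0"
    using anti x y by (cases "x \<le> y") (auto simp: monotone_on_def mult_le_0_iff)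
  with t have "t * (1 - t) * ((x - y) * (f x - f y)) \<le> 0"
    by (simp add: mult_nonneg_nonpos)
  moreover have "z * ((1 - t) * f x + t * f y)
      = (1 - t) * (x * f x) + t * (y * f y) - t * (1 - t) * ((x - y) * (f x - f y))"
    unfolding z_def by algebra
  ultimately have "(1 - t) * (x * f x) + t * (y * f y) \<le> z * ((1 - t) * f x + t * f y)"
    by linarith
  also have "\<dots> < z * f z"
  proof -
    have "(1 - t) * f x + t * f y < f z"
      using conc x y \<open>x \<noteq> y\<close> t unfolding strictly_concave_on_def z_def by blast
    then show ?thesis
      using \<open>0 < z\<close> by simp
  qed
  finally show "(1 - t) * (x * f x) + t * (y * f y) < z * f z" .
qed

lemma strictly_concave_on_scale_add_linear:
  fixes g :: "real \<Rightarrow> real"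
  assumes "strictly_concave_on S g" and "0 < a"
  shows "strictly_concave_on S (\<lambda>p. a * g p + b * p)"
  unfolding strictly_concave_on_def
proof (intro conjI ballI impI allI)
  show "convex S"
    using assms(1) by (simp add: strictly_concave_on_def)
  fix x y t :: real
  assume "x \<in> S" "y \<in> S" "x \<noteq> y" "0 < t \<and> t < 1"
  then have "(1 - t) * g x + t * g y < g ((1 - t) * x + t * y)"
    using assms(1) unfolding strictly_concave_on_def by blast
  then have "a * ((1 - t) * g x + t * g y) < a * g ((1 - t) * x + t * y)"
    using assms(2) by simp
  then show "(1 - t) * (a * g x + b * x) + t * (a * g y + b * y)
      < a * g ((1 - t) * x + t * y) + b * ((1 - t) * x + t * y)"
    by (simp add: algebra_simps)
qed

lemma strictly_concave_on_max_unique: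
  fixes g :: "real \<Rightarrow> real"
  assumes conc: "strictly_concave_on S g" and max: "\<forall>p\<in>S. g p \<le> g a"
    and a: "a \<in> S" and x: "x \<in> S" and "x \<noteq> a"
  shows "g x < g a"
proof (rule ccontr)
  assume "\<not> g x < g a"
  have "(x + a) / 2 \<in> S"
    using conc a x convexD[of S x a "1/2" "1/2"] by (simp add: strictly_concave_on_def add_divide_distrib)
  moreover have "(g x + g a) / 2 < g ((x + a) / 2)"
  proof -
    have "\<forall>t. 0 < t \<and> t < 1 \<longrightarrow> (1 - t) * g x + t * g a < g ((1 - t) * x + t * a)"
      using conc a x \<open>x \<noteq> a\<close> unfolding strictly_concave_on_def by blast
    from this[rule_format, of "1/2"] show ?thesis
      by (simp add: add_divide_distrib)
  qed
  ultimately show False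
    using max \<open>\<not> g x < g a\<close> by force
qed

locale static_price_duopoly =
  fixes Lam e phih :: real and f :: "real \<Rightarrow> real" and phim :: real
  assumes e_pos: "0 < e" and e_less_Lam: "e < Lam"
    and f_concave: "strictly_concave_on {0..phih} f"
    and f_decreasing: "strict_antimono_on {0..phih} f"
    and f_continuous: "continuous_on {0..phih} f"
    and phim_mem: "phim \<in> {0..phih}"
    and phim_max: "\<forall>p\<in>{0..phih}. mfun Lam e f p \<le> mfun Lam e f phim"
    and phi_low_less_phim: "phi_low Lam e f phih < ereal phim"
    and phim_le_phi_bar: "ereal phim \<le> phi_bar Lam e f phih"
begin

abbreviation M where "M \<equiv> payoff Lam e f phih"
abbreviation m where "m \<equiv> mfun Lam e f"
abbreviation phiL where "phiL \<equiv> m phim / e"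

lemma Lam_pos: "0 < Lam"
  using e_pos e_less_Lam by simp

lemma f_antimono: "antimono_on {0..phih} f"
  using f_decreasing by (simp add: strict_antimono_iff_antimono)

lemma phi_low_le_iff: "x \<in> {0..phih} \<Longrightarrow> phi_low Lam e f phih \<le> ereal x \<longleftrightarrow> f x \<le> 2 * e / Lam"
  unfolding phi_low_def by (rule Inf_sublevel_le_iff[OF f_continuous f_antimono])

lemma phi_bar_le_iff: "x \<in> {0..phih} \<Longrightarrow> phi_bar Lam e f phih \<le> ereal x \<longleftrightarrow> f x \<le> e / Lam"
  unfolding phi_bar_def by (rule Inf_sublevel_le_iff[OF f_continuous f_antimono])

lemma phi_low_real:
  obtains p0 where "phi_low Lam e f phih = ereal p0" and "0 \<le> p0" and "p0 < phim"
proof -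
  have "ereal 0 \<le> phi_low Lam e f phih"
    unfolding phi_low_def by (rule INF_greatest) auto
  with phi_low_less_phim that show ?thesis
    by (cases "phi_low Lam e f phih") auto
qed

lemma phim_pos: "0 < phim"
  using phi_low_real by (metis le_less_trans)

lemma f_phim_less: "f phim < 2 * e / Lam"
  using Inf_sublevel_less_imp_less[OF f_decreasing phim_mem] phi_low_less_phim
  unfolding phi_low_def by blast

lemma m_phim_pos: "0 < m phim"
proof -
  have half: "phim / 2 \<in> {0..phih}"
    using phim_pos phim_mem by auto
  have "ereal (phim / 2) < phi_bar Lam e f phih"
    using phim_pos by (intro order.strict_trans2[OF _ phim_le_phi_bar]) simp
  then have "e / Lam < f (phim / 2)"
    using phi_bar_le_iff[OF half] by (simp add: not_le[symmetric])
  then have "0 < m (phim / 2)"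
    using Lam_pos phim_pos by (simp add: mfun_def field_simps)
  also have "m (phim / 2) \<le> m phim"
    using phim_max half by blast
  finally show ?thesis .
qed

lemma phim_less_phi_bar: "ereal phim < phi_bar Lam e f phih"
proof -
  have "e / Lam < f phim"
    using m_phim_pos phim_pos Lam_pos by (simp add: mfun_def field_simps zero_less_mult_iff)
  then show ?thesis
    using phi_bar_le_iff[OF phim_mem] by (simp add: not_le[symmetric])
qed

lemma phiL_pos: "0 < phiL"
  using m_phim_pos e_pos by simp

lemma phiL_less_phim: "phiL < phim"
proof -
  have "Lam * f phim - e < e"
    using f_phim_less Lam_pos by (simp add: field_simps)
  then have "m phim < e * phim"
    using phim_pos by (simp add: mfun_def)
  then show ?thesis
    using e_pos by (simp add: field_simps)
qed

lemma m_less_m_phim: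
  assumes "x \<in> {0..phih}" and "x \<noteq> phim"
  shows "m x < m phim"
proof -
  have "strictly_concave_on {0..phih} (\<lambda>p. Lam * (p * f p) + (- e) * p)"
    by (intro strictly_concave_on_scale_add_linear strictly_concave_on_mult_id
        f_concave f_antimono Lam_pos) auto
  moreover have "(\<lambda>p. Lam * (p * f p) + (- e) * p) = m"
    by (auto simp: mfun_def fun_eq_iff algebra_simps)
  ultimately show ?thesis
    using strictly_concave_on_max_unique phim_max phim_mem assms by metis
qed

lemma payoff_undercut:
  assumes "x < y" and "y \<le> phim"
  shows "M x y = e * x"
proof -
  have "ereal y < phi_bar Lam e f phih"
    using assms(2) by (intro order.strict_trans1[OF _ phim_less_phi_bar]) simp
  then show ?thesis
    using assms(1) by (simp add: payoff_def)
qed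

lemma not_less_phi_low: "phim \<le> x \<Longrightarrow> \<not> ereal x < phi_low Lam e f phih"
  using phi_low_less_phim by (meson ereal_less_eq(3) order.strict_trans1 order_less_asym)

lemma payoff_phim_below:
  assumes "y < phim"
  shows "M phim y = e * phiL"
  using assms not_less_phi_low[of phim] phim_less_phi_bar e_pos by (simp add: payoff_def)

lemma payoff_above_phim_less:
  assumes "x \<in> {0..phih}" and "phim < x" and "y < x"
  shows "M x y < e * phiL"
proof -
  have "\<not> ereal x < phi_low Lam e f phih"
    using assms(2) not_less_phi_low by simp
  then have "M x y < m phim"
    using assms m_less_m_phim[of x] m_phim_pos by (simp add: payoff_def)
  then show ?thesis
    using e_pos by simp
qed

lemma exists_cycle_reply_greater:
  assumes y: "y \<in> {phiL..phim}" and v: "v < e * y"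
  shows "\<exists>x'\<in>{phiL..phim}. v < M x' y"
proof (cases "y = phiL")
  case True
  then have "v < M phim y"
    using v payoff_phim_below phiL_less_phim by simp
  then show ?thesis
    using phiL_less_phim by (intro bexI[of _ phim]) auto
next
  case False
  define w where "w = v / e"
  have "w < y"
    using v e_pos by (simp add: w_def pos_divide_less_eq mult.commute)
  define x' where "x' = max phiL ((w + y) / 2)"
  have "phiL < y"
    using y False by simp
  with \<open>w < y\<close> have "x' < y" and "w < x'"
    by (auto simp: x'_def less_max_iff_disj max_less_iff_conj)
  then have "v < M x' y"
    using y payoff_undercut e_pos by (simp add: w_def pos_divide_less_eq mult.commute)
  moreover have "x' \<in> {phiL..phim}"
    using \<open>x' < y\<close> y by (simp add: x'_def)
  ultimately show ?thesis by blast
qed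

lemma payoff_outside_cycle_less:
  assumes y: "y \<in> {phiL..phim}" and x: "x \<in> {0..phih} - {phiL..phim}"
  shows "M x y < e * phiL"
proof (cases "x < phiL")
  case True
  then have "M x y = e * x"
    using y payoff_undercut by simp
  then show ?thesis
    using mult_strict_left_mono[OF True e_pos] by simp
next
  case False
  then show ?thesis
    using x y payoff_above_phim_less by simp
qed

lemma outside_cycle_improvable:
  assumes "y \<in> {phiL..phim}" and "x \<in> {0..phih} - {phiL..phim}"
  shows "\<exists>x'\<in>{phiL..phim}. M x y < M x' y"
proof -
  have "e * phiL \<le> e * y"
    using assms(1) e_pos by (intro mult_left_mono) auto
  then show ?thesis
    using exists_cycle_reply_greater[OF assms(1)] payoff_outside_cycle_less[OF assms] by simp
qed

lemma tie_improvable: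
  assumes x: "x \<in> {phiL..phim}"
  shows "\<exists>x'\<in>{phiL..phim}. M x x < M x' x"
proof -
  obtain p0 where p0: "phi_low Lam e f phih = ereal p0" "p0 < phim"
    using phi_low_real by metis
  have x0: "x \<in> {0..phih}" and "0 < x"
    using x phiL_pos phim_mem by auto
  show ?thesis
  proof (cases "x < p0")
    case True
    define x' where "x' = (x + p0) / 2"
    have "x < x'" "x' < p0"
      using True by (auto simp: x'_def)
    then have "M x x < M x' x"
      using True p0 e_pos by (simp add: payoff_def)
    moreover have "x' \<in> {phiL..phim}"
      using x \<open>x < x'\<close> \<open>x' < p0\<close> p0(2) by simp
    ultimately show ?thesis by blast
  next
    case False
    then have tie: "M x x = Lam / 2 * f x * x"
      using p0 by (simp add: payoff_def)
    have "f x \<le> 2 * e / Lam"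
      using phi_low_le_iff[OF x0] p0 False by simp
    then consider "f x < 2 * e / Lam" | "f x = 2 * e / Lam"
      by linarith
    then show ?thesis
    proof cases
      case 1
      then have "Lam * f x < 2 * e"
        using Lam_pos by (simp add: field_simps)
      then have "M x x < e * x"
        using tie mult_strict_right_mono[OF _ \<open>0 < x\<close>] by fastforce
      then show ?thesis
        using exists_cycle_reply_greater x by blast
    next
      case 2
      then have "x < phim"
        using x f_phim_less by (cases "x = phim") auto
      have "M x x = m x"
        using tie 2 Lam_pos by (simp add: mfun_def field_simps)
      also have "\<dots> < m phim"
        using m_less_m_phim x0 \<open>x < phim\<close> by simp
      also have "\<dots> = M phim x"
        using payoff_phim_below[OF \<open>x < phim\<close>] e_pos by simp
      finally show ?thesis
        using phiL_less_phim by (intro bexI[of _ phim]) auto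
    qed
  qed
qed

lemma cycle_profile_improvable:
  assumes "x \<in> {phiL..phim}" and "y \<in> {phiL..phim}"
  shows "(\<exists>x'\<in>{phiL..phim}. M x y < M x' y) \<or> (\<exists>y'\<in>{phiL..phim}. M y x < M y' x)"
proof -
  consider "x < y" | "y < x" | "x = y"
    by linarith
  then show ?thesis
  proof cases
    case 1
    then show ?thesis
      using assms exists_cycle_reply_greater[of y "M x y"] payoff_undercut e_pos by simp
  next
    case 2
    then show ?thesis
      using assms exists_cycle_reply_greater[of x "M y x"] payoff_undercut e_pos by simp
  next
    case 3
    then show ?thesis
      using assms tie_improvable by blast
  qed
qed

theorem equilibrium_cycle_phiL_phim: "equilibrium_cycle phih M (\<lambda>x y. M y x) phiL phim"
  unfolding equilibrium_cycle_def
proof (intro conjI)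
  show "0 \<le> phiL" and "phiL \<le> phim" and "phim \<le> phih"
    using phiL_pos phiL_less_phim phim_mem by auto
  show "\<forall>y\<in>{phiL..phim}. \<forall>x\<in>{0..phih} - {phiL..phim}. \<exists>x'\<in>{phiL..phim}. M x y < M x' y"
    and "\<forall>x\<in>{phiL..phim}. \<forall>y\<in>{0..phih} - {phiL..phim}. \<exists>y'\<in>{phiL..phim}. M y x < M y' x"
    using outside_cycle_improvable by blast+
  show "\<forall>x\<in>{phiL..phim}. \<forall>y\<in>{phiL..phim}.
      (\<exists>x'\<in>{phiL..phim}. M x y < M x' y) \<or> (\<exists>y'\<in>{phiL..phim}. M y x < M y' x)"
    using cycle_profile_improvable by blast
qed

end

theorem theorem5:
  fixes Lam e phih :: real and f :: "real \<Rightarrow> real" and phim :: real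
  assumes "0 < e" and "e < Lam" and "0 < phih"
    and "f ` {0..phih} \<subseteq> {0<..1}"
    and "strictly_concave_on {0..phih} f"
    and "strict_antimono_on {0..phih} f"
    and "\<forall>x\<in>{0..phih}. f differentiable (at x within {0..phih})"
    and "f 0 = 1"
    and "phim \<in> {0..phih}"
    and "\<forall>p\<in>{0..phih}. mfun Lam e f p \<le> mfun Lam e f phim"
    and "phi_low Lam e f phih < ereal phim"
    and "ereal phim \<le> min (ereal phih) (phi_bar Lam e f phih)"
  shows "equilibrium_cycle phih
           (\<lambda>x y. payoff Lam e f phih x y) (\<lambda>x y. payoff Lam e f phih y x)
           (mfun Lam e f phim / e) phim"
proof -
  have "continuous_on {0..phih} f"
    using assms(7) by (simp add: continuous_on_eq_continuous_within differentiable_imp_continuous_within)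
  then interpret static_price_duopoly Lam e phih f phim
    using assms by unfold_locales auto
  show ?thesis
    using equilibrium_cycle_phiL_phim by simp
qed

end
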